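(* Let $X$ be a Banach space, $B$ a subset of $B_{X^{*}}$ that (I)-generates $B_{X^{*}}$, and $A=(a_{nk})_{n,k\in\mathbb{N}}$ a regular matrix. Let $(x_n)_{n\in\mathbb{N}}$ be a bounded sequence in $X$ and $x\in X$ such that $(x^{*}(x_n))_{n\in\mathbb{N}}$ is $F_A$-convergent to $x^{*}(x)$ for every $x^{*}\in B$. Then $(x^{*}(x_n))_{n\in\mathbb{N}}$ is $F_A$-convergent to $x^{*}(x)$ for every $x^{*}\in X^{*}$. In particular, if $X$ is a real Banach space, the same holds with $F_A$-convergence replaced by almost convergence.
   Context: A complex matrix $A=(a_{nk})$ is regular if $\sup_n\sum_k|a_{nk}|<\infty$, $\lim_n\sum_k a_{nk}=1$ and $\lim_n a_{nk}=0$ for all $k$. A bounded scalar sequence $(s_k)$ is $F_A$-convergent to $s$ if $\sum_{k=1}^\infty a_{nk}s_{k+l}\to s$ as $n\to\infty$, uniformly in $l\in\mathbb{N}_0$. A Banach limit is a linear functional $L:\ell^\infty\to\mathbb{R}$ (real $\ell^\infty$) with $L(1,1,\dots)=1$, $L(\mathbf{x})\ge0$ whenever $\mathbf{x}\ge0$, and $L(T\mathbf{x})=L(\mathbf{x})$ where $T$ is the left shift. A bounded real sequence is almost convergent to $s$ if $L((s_k))=s$ for every Banach limit $L$. A subset $B\subseteq B_{X^*}$ (I)-generates $B_{X^*}$ if whenever $B=\bigcup_{n=1}^\infty B_n$, $B_{X^*}$ equals the norm-closure of the convex hull of $\bigcup_n\overline{\mathrm{co}}^{w^*}(B_n)$ (weak*-closed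 convex hulls). *)

theory Defs
  imports "HOL-Analysis.Analysis"
begin

text \<open>Complex Banach spaces are modelled as real Banach spaces together with a
  complex structure J (multiplication by the imaginary unit).\<close>

definition cscale :: "('a::real_vector \<Rightarrow> 'a) \<Rightarrow> complex \<Rightarrow> 'a \<Rightarrow> 'a" where
  "cscale J c x = Re c *\<^sub>R x + Im c *\<^sub>R J x"

definition complex_structure :: "('a::real_normed_vector \<Rightarrow> 'a) \<Rightarrow> bool" where
  "complex_structure J \<longleftrightarrow> linear J \<and> (\<forall>x. J (J x) = - x)
     \<and> (\<forall>c x. norm (cscale J c x) = cmod c * norm x)"

definition cdual :: "('a::real_normed_vector \<Rightarrow> 'a) \<Rightarrow> ('a \<Rightarrow> complex) set" where
  "cdual J = {f. bounded_linear f \<and> (\<forall>x. f (J x) = \<i> * f x)}"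

definition rdual :: "('a::real_normed_vector \<Rightarrow> real) set" where
  "rdual = {f. bounded_linear f}"

definition dual_ball :: "('a::real_normed_vector \<Rightarrow> 'b::real_normed_vector) set \<Rightarrow> ('a \<Rightarrow> 'b) set" where
  "dual_ball D = {f \<in> D. onorm f \<le> 1}"

definition fconv :: "('a \<Rightarrow> 'b::real_vector) set \<Rightarrow> ('a \<Rightarrow> 'b) set" where
  "fconv S = {f. \<exists>(m::nat) u g. (\<forall>i<m. 0 \<le> u i \<and> g i \<in> S) \<and> (\<Sum>i<m. u i) = 1
                      \<and> f = (\<lambda>y. \<Sum>i<m. u i *\<^sub>R g i y)}"

definition wstar_closure :: "('a \<Rightarrow> 'b::real_normed_vector) set \<Rightarrow> ('a \<Rightarrow> 'b) set \<Rightarrow> ('a \<Rightarrow> 'b) set" where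
  "wstar_closure D S = {f \<in> D. \<forall>F e. finite F \<and> e > 0 \<longrightarrow>
                         (\<exists>g\<in>S. \<forall>y\<in>F. norm (g y - f y) < e)}"

definition dnorm_closure :: "('a::real_normed_vector \<Rightarrow> 'b::real_normed_vector) set \<Rightarrow> ('a \<Rightarrow> 'b) set \<Rightarrow> ('a \<Rightarrow> 'b) set" where
  "dnorm_closure D S = {f \<in> D. \<forall>e>0. \<exists>g\<in>S. onorm (\<lambda>y. f y - g y) < e}"

definition I_generates :: "('a::real_normed_vector \<Rightarrow> 'b::real_normed_vector) set \<Rightarrow> ('a \<Rightarrow> 'b) set \<Rightarrow> bool" where
  "I_generates D B \<longleftrightarrow> B \<subseteq> dual_ball D \<and>
     (\<forall>Bn :: nat \<Rightarrow> ('a \<Rightarrow> 'b) set. B = (\<Union>n. Bn n) \<longrightarrow>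
        dual_ball D = dnorm_closure D (fconv (\<Union>n. wstar_closure D (fconv (Bn n)))))"

text \<open>Regular (complex) matrices; indices start at 0.\<close>
definition regular_matrix :: "(nat \<Rightarrow> nat \<Rightarrow> complex) \<Rightarrow> bool" where
  "regular_matrix a \<longleftrightarrow>
     (\<exists>M. \<forall>n. summable (\<lambda>k. cmod (a n k)) \<and> (\<Sum>k. cmod (a n k)) \<le> M)
     \<and> (\<lambda>n. \<Sum>k. a n k) \<longlonglongrightarrow> 1
     \<and> (\<forall>k. (\<lambda>n. a n k) \<longlonglongrightarrow> 0)"

definition FA_convergent :: "(nat \<Rightarrow> nat \<Rightarrow> complex) \<Rightarrow> (nat \<Rightarrow> complex) \<Rightarrow> complex \<Rightarrow> bool" where
  "FA_convergent a s t \<longleftrightarrow> Bseq s \<and>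
     (\<forall>e>0. \<exists>N. \<forall>n\<ge>N. \<forall>l. cmod ((\<Sum>k. a n k * s (k + l)) - t) < e)"

text \<open>Banach limits on real l-infinity (bounded real sequences); values of L
  outside l-infinity are irrelevant.\<close>
definition banach_limit :: "((nat \<Rightarrow> real) \<Rightarrow> real) \<Rightarrow> bool" where
  "banach_limit L \<longleftrightarrow>
     (\<forall>x y. Bseq x \<and> Bseq y \<longrightarrow> L (\<lambda>k. x k + y k) = L x + L y)
     \<and> (\<forall>c x. Bseq x \<longrightarrow> L (\<lambda>k. c * x k) = c * L x)
     \<and> L (\<lambda>k. 1) = 1
     \<and> (\<forall>x. Bseq x \<and> (\<forall>k. x k \<ge> 0) \<longrightarrow> L x \<ge> 0)
     \<and> (\<forall>x. Bseq x \<longrightarrow> L (\<lambda>k. x (Suc k)) = L x)"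

definition almost_convergent :: "(nat \<Rightarrow> real) \<Rightarrow> real \<Rightarrow> bool" where
  "almost_convergent s t \<longleftrightarrow> Bseq s \<and> (\<forall>L. banach_limit L \<longrightarrow> L s = t)"

end

theory Submission
  imports Defs
begin

text \<open>
  For a functional g, the deviations of the A-means of the shifted sequences g(x_(k+l)) from g(x)
  depend real-linearly on g, and since every row of A is absolutely summable they are controlled
  by finitely many values of g up to a small tail: on norm-bounded sets they are weak*-continuous.
  Fix e > 0 and let B_m be the set of f in B whose deviations are at most e/2 from the m-th row on,
  uniformly in the shift. The B_m exhaust B, so by (I)-generation every functional in the dual ball
  is a norm limit of convex combinations of weak*-limits of convex combinations of elements of some
  B_m; each of these operations preserves the uniform bound, and a norm perturbation by d changes
  the deviations by O(d). Scaling gives the whole dual.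

  Almost convergence is F-convergence for the Cesaro matrix (Lorentz): uniform convergence of the
  averages forces every Banach limit to the same value, and conversely, if averages over windows of
  growing length stay e away from t, any cluster point of these averaging functionals in the
  product topology is a Banach limit that differs from t on the sequence.
\<close>

lemma summable_mult_bounded:
  fixes \<alpha> b :: "nat \<Rightarrow> 'a::{real_normed_div_algebra,banach}"
  assumes \<alpha>: "summable (\<lambda>k. norm (\<alpha> k))" and b: "\<And>k. norm (b k) \<le> c"
  shows "summable (\<lambda>k. \<alpha> k * b k)"
    and "norm (\<Sum>k. \<alpha> k * b k) \<le> (\<Sum>k. norm (\<alpha> k)) * c"
proof -
  have le: "norm (\<alpha> k * b k) \<le> norm (\<alpha> k) * c" for k
    unfolding norm_mult by (rule mult_left_mono[OF b norm_ge_zero])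
  have \<alpha>c: "summable (\<lambda>k. norm (\<alpha> k) * c)"
    using \<alpha> by (rule summable_mult2)
  have norm_summable: "summable (\<lambda>k. norm (\<alpha> k * b k))"
    by (rule summable_comparison_test'[OF \<alpha>c]) (simp add: le)
  then show "summable (\<lambda>k. \<alpha> k * b k)"
    by (rule summable_norm_cancel)
  have "norm (\<Sum>k. \<alpha> k * b k) \<le> (\<Sum>k. norm (\<alpha> k * b k))"
    by (rule summable_norm[OF norm_summable])
  also have "\<dots> \<le> (\<Sum>k. norm (\<alpha> k) * c)"
    by (rule suminf_le[OF le norm_summable \<alpha>c])
  also have "\<dots> = (\<Sum>k. norm (\<alpha> k)) * c"
    using suminf_mult2[OF \<alpha>] by simp
  finally show "norm (\<Sum>k. \<alpha> k * b k) \<le> (\<Sum>k. norm (\<alpha> k)) * c" .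
qed

lemma norm_suminf_mult_le_split:
  fixes \<alpha> b :: "nat \<Rightarrow> 'a::{real_normed_div_algebra,banach}"
  assumes \<alpha>: "summable (\<lambda>k. norm (\<alpha> k))" and b: "\<And>k. norm (b k) \<le> c"
    and head: "\<And>k. k < K \<Longrightarrow> norm (b k) \<le> d" and "0 \<le> d"
  shows "norm (\<Sum>k. \<alpha> k * b k) \<le> (\<Sum>k. norm (\<alpha> k)) * d + (\<Sum>k. norm (\<alpha> (k + K))) * c"
proof -
  have tail: "summable (\<lambda>k. norm (\<alpha> (k + K)))"
    using summable_ignore_initial_segment[OF \<alpha>, of K] by simp
  have "(\<Sum>k. \<alpha> k * b k) = (\<Sum>k. \<alpha> (k + K) * b (k + K)) + (\<Sum>k<K. \<alpha> k * b k)"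
    by (rule suminf_split_initial_segment[OF summable_mult_bounded(1)[OF \<alpha> b]])
  then have "norm (\<Sum>k. \<alpha> k * b k)
      \<le> norm (\<Sum>k. \<alpha> (k + K) * b (k + K)) + norm (\<Sum>k<K. \<alpha> k * b k)"
    by (simp add: norm_triangle_ineq)
  moreover have "norm (\<Sum>k. \<alpha> (k + K) * b (k + K)) \<le> (\<Sum>k. norm (\<alpha> (k + K))) * c"
    by (rule summable_mult_bounded(2)[OF tail b])
  moreover have "norm (\<Sum>k<K. \<alpha> k * b k) \<le> (\<Sum>k<K. norm (\<alpha> k)) * d"
    unfolding sum_distrib_right
    by (rule order_trans[OF norm_sum sum_mono]) (simp add: norm_mult head mult_left_mono)
  moreover have "(\<Sum>k<K. norm (\<alpha> k)) * d \<le> (\<Sum>k. norm (\<alpha> k)) * d"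
    using sum_le_suminf[OF \<alpha>] \<open>0 \<le> d\<close> by (simp add: mult_right_mono)
  ultimately show ?thesis
    by linarith
qed

lemma fconvI:
  fixes m :: nat
  assumes "\<And>i. i < m \<Longrightarrow> 0 \<le> u i" "\<And>i. i < m \<Longrightarrow> g i \<in> S" "(\<Sum>i<m. u i) = 1"
  shows "(\<lambda>y. \<Sum>i<m. u i *\<^sub>R g i y) \<in> fconv S"
  unfolding fconv_def using assms by blast

lemma fconvE:
  assumes "h \<in> fconv S"
  obtains m :: nat and u g where "\<And>i. i < m \<Longrightarrow> 0 \<le> u i" "\<And>i. i < m \<Longrightarrow> g i \<in> S"
    "(\<Sum>i<m. u i) = 1" "h = (\<lambda>y. \<Sum>i<m. u i *\<^sub>R g i y)"
  using assms unfolding fconv_def by blast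

lemma fconv_mono: "S \<subseteq> T \<Longrightarrow> fconv S \<subseteq> fconv T"
  unfolding fconv_def by blast

lemma wstar_closure_mono: "S \<subseteq> T \<Longrightarrow> wstar_closure D S \<subseteq> wstar_closure D T"
  unfolding wstar_closure_def by blast
lemma fconv_Union_mono:
  fixes W :: "nat \<Rightarrow> ('a \<Rightarrow> 'b::real_vector) set"
  assumes "mono W" and "h \<in> fconv (\<Union>m. W m)"
  shows "\<exists>N. h \<in> fconv (W N)"
proof -
  obtain p :: nat and u g where u: "\<And>i. i < p \<Longrightarrow> 0 \<le> u i" and g: "\<And>i. i < p \<Longrightarrow> g i \<in> (\<Union>m. W m)"
    and sum: "(\<Sum>i<p. u i) = 1" and h: "h = (\<lambda>y. \<Sum>i<p. u i *\<^sub>R g i y)"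
    using assms(2) by (rule fconvE) (rule that)
  have "\<forall>i. \<exists>m. i < p \<longrightarrow> g i \<in> W m"
    using g by blast
  then obtain m where m: "\<And>i. i < p \<Longrightarrow> g i \<in> W (m i)"
    by metis
  have gN: "g i \<in> W (\<Sum>i<p. m i)" if "i < p" for i
  proof -
    have "m i \<le> (\<Sum>i<p. m i)"
      using that by (intro member_le_sum) auto
    then show ?thesis
      using m[OF that] monoD[OF assms(1)] by blast
  qed
  have "h \<in> fconv (W (\<Sum>i<p. m i))"
    unfolding h by (rule fconvI[OF u gN sum])
  then show ?thesis ..
qed

lemma bounded_linear_fconv:
  assumes "h \<in> fconv S" and "\<And>g. g \<in> S \<Longrightarrow> bounded_linear g"
  shows "bounded_linear h"
  using assms(1)
proof (rule fconvE)
  fix m :: nat and u g assume "\<And>i. i < m \<Longrightarrow> g i \<in> S" and h: "h = (\<lambda>y. \<Sum>i<m. u i *\<^sub>R g i y)"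
  then show "bounded_linear h"
    using assms(2) by (auto intro!: bounded_linear_sum bounded_linear_const_scaleR)
qed

lemma onorm_fconv_le:
  assumes "h \<in> fconv S" and "\<And>g. g \<in> S \<Longrightarrow> bounded_linear g \<and> onorm g \<le> 1"
  shows "onorm h \<le> 1"
  using assms(1)
proof (rule fconvE)
  fix m :: nat and u g assume u: "\<And>i. i < m \<Longrightarrow> 0 \<le> u i" and g: "\<And>i. i < m \<Longrightarrow> g i \<in> S"
    and sum: "(\<Sum>i<m. u i) = 1" and h: "h = (\<lambda>y. \<Sum>i<m. u i *\<^sub>R g i y)"
  have "norm (h y) \<le> 1 * norm y" for y
  proof -
    have "norm (h y) \<le> (\<Sum>i<m. u i * norm (g i y))"
      unfolding h by (rule order_trans[OF norm_sum]) (simp add: u)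
    also have "\<dots> \<le> (\<Sum>i<m. u i * norm y)"
    proof (rule sum_mono)
      fix i assume "i \<in> {..<m}"
      then have g_le: "norm (g i y) \<le> norm y"
        using onorm[of "g i" y] assms(2)[OF g, of i]
          mult_right_mono[of "onorm (g i)" 1 "norm y"] by auto
      show "u i * norm (g i y) \<le> u i * norm y"
        using u \<open>i \<in> {..<m}\<close> by (intro mult_left_mono[OF g_le]) auto
    qed
    finally show ?thesis
      using sum by (simp add: sum_distrib_right[symmetric])
  qed
  then show "onorm h \<le> 1"
    by (rule onorm_bound[rotated]) simp
qed

section \<open>A-means of a bounded sequence under functionals\<close>

lemma norm_apply_le_onorm:
  assumes "bounded_linear f" and "norm y \<le> R"
  shows "norm (f y) \<le> onorm f * R"
  using onorm[OF assms(1), of y] mult_left_mono[OF assms(2) onorm_pos_le[OF assms(1)]]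
  by linarith

text \<open>The scalar map \<phi> is the identity for the complex dual and the embedding of the reals for the
  real dual.\<close>

locale shifted_A_means = \<phi>: bounded_linear \<phi>
  for \<phi> :: "'b::real_normed_vector \<Rightarrow> complex" +
  fixes a :: "nat \<Rightarrow> nat \<Rightarrow> complex"
    and xs :: "nat \<Rightarrow> 'a::real_normed_vector" and x :: 'a and M R :: real
  assumes summable_row: "summable (\<lambda>k. cmod (a n k))"
    and row_norm_le: "(\<Sum>k. cmod (a n k)) \<le> M"
    and norm_xs_le: "norm (xs j) \<le> R"
begin

definition deviation :: "nat \<Rightarrow> nat \<Rightarrow> ('a \<Rightarrow> 'b) \<Rightarrow> complex" where
  "deviation n l g = (\<Sum>k. a n k * \<phi> (g (xs (k + l)))) - \<phi> (g x)"

definition deviation_vanishes :: "('a \<Rightarrow> 'b) \<Rightarrow> bool" where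
  "deviation_vanishes g \<longleftrightarrow> (\<forall>e>0. \<exists>N. \<forall>n\<ge>N. \<forall>l. cmod (deviation n l g) < e)"

lemma M_nonneg: "0 \<le> M"
  using suminf_nonneg[OF summable_row[of 0]] row_norm_le[of 0] by simp

lemma R_nonneg: "0 \<le> R"
  using norm_ge_zero[of "xs 0"] norm_xs_le[of 0] by linarith

lemma norm_\<phi>_apply_le:
  assumes "bounded_linear g" and "norm y \<le> c"
  shows "norm (\<phi> (g y)) \<le> onorm \<phi> * (onorm g * c)"
  by (rule norm_apply_le_onorm[OF \<phi>.bounded_linear_axioms norm_apply_le_onorm[OF assms]])

lemma summable_mean:
  assumes "bounded_linear g"
  shows "summable (\<lambda>k. a n k * \<phi> (g (xs (k + l))))"
  using summable_mult_bounded(1)[OF summable_row norm_\<phi>_apply_le[OF assms norm_xs_le]] .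

lemma FA_convergent_iff_deviation_vanishes:
  assumes "bounded_linear g"
  shows "FA_convergent a (\<lambda>n. \<phi> (g (xs n))) (\<phi> (g x)) \<longleftrightarrow> deviation_vanishes g"
proof -
  have "Bseq (\<lambda>n. \<phi> (g (xs n)))"
    using norm_\<phi>_apply_le[OF assms norm_xs_le] by (rule BseqI')
  then show ?thesis
    unfolding FA_convergent_def deviation_vanishes_def deviation_def by simp
qed

lemma deviation_add:
  assumes "bounded_linear g" and "bounded_linear h"
  shows "deviation n l (\<lambda>y. g y + h y) = deviation n l g + deviation n l h"
proof -
  have "(\<Sum>k. a n k * \<phi> (g (xs (k + l)) + h (xs (k + l))))
      = (\<Sum>k. a n k * \<phi> (g (xs (k + l)))) + (\<Sum>k. a n k * \<phi> (h (xs (k + l))))"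
    using suminf_add[OF summable_mean[OF assms(1)] summable_mean[OF assms(2)]]
    by (simp add: \<phi>.add distrib_left)
  then show ?thesis
    unfolding deviation_def by (simp add: \<phi>.add)
qed

lemma deviation_scaleR:
  assumes "bounded_linear g"
  shows "deviation n l (\<lambda>y. r *\<^sub>R g y) = of_real r * deviation n l g"
proof -
  have "(\<Sum>k. a n k * \<phi> (r *\<^sub>R g (xs (k + l)))) = of_real r * (\<Sum>k. a n k * \<phi> (g (xs (k + l))))"
    using suminf_mult[OF summable_mean[OF assms], of "of_real r"]
    by (simp add: \<phi>.scale scaleR_conv_of_real mult_ac)
  then show ?thesis
    unfolding deviation_def
    by (simp add: \<phi>.scale scaleR_conv_of_real right_diff_distrib)
qed

lemma deviation_diff:
  assumes "bounded_linear g" and "bounded_linear h"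
  shows "deviation n l (\<lambda>y. g y - h y) = deviation n l g - deviation n l h"
  using deviation_add[OF assms(1) bounded_linear_const_scaleR[OF assms(2), of "-1"]]
    deviation_scaleR[OF assms(2), where r = "-1"] by simp

lemma deviation_sum:
  assumes "finite I" and "\<And>i. i \<in> I \<Longrightarrow> bounded_linear (g i)"
  shows "deviation n l (\<lambda>y. \<Sum>i\<in>I. c i *\<^sub>R g i y) = (\<Sum>i\<in>I. of_real (c i) * deviation n l (g i))"
  using assms
proof (induction I rule: finite_induct)
  case empty
  then show ?case
    unfolding deviation_def by (simp add: \<phi>.zero)
next
  case (insert i I)
  have gi: "bounded_linear (g i)"
    using insert.prems by simp
  have "bounded_linear (\<lambda>y. \<Sum>i\<in>I. c i *\<^sub>R g i y)"
    using insert.prems by (auto intro!: bounded_linear_sum bounded_linear_const_scaleR)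
  then show ?case
    using insert deviation_add[OF bounded_linear_const_scaleR[OF gi]] deviation_scaleR[OF gi]
    by simp
qed

lemma norm_deviation_le:
  assumes "bounded_linear g"
  shows "norm (deviation n l g) \<le> onorm \<phi> * (M * R + norm x) * onorm g"
proof -
  have "norm (\<Sum>k. a n k * \<phi> (g (xs (k + l)))) \<le> (\<Sum>k. cmod (a n k)) * (onorm \<phi> * (onorm g * R))"
    by (rule summable_mult_bounded(2)[OF summable_row norm_\<phi>_apply_le[OF assms norm_xs_le]])
  also have "\<dots> \<le> M * (onorm \<phi> * (onorm g * R))"
    using row_norm_le R_nonneg onorm_pos_le[OF assms] onorm_pos_le[OF \<phi>.bounded_linear_axioms]
    by (intro mult_right_mono) auto
  finally have "norm (deviation n l g) \<le> M * (onorm \<phi> * (onorm g * R)) + onorm \<phi> * (onorm g * norm x)"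
    unfolding deviation_def
    using norm_\<phi>_apply_le[OF assms order_refl, of x] norm_triangle_ineq4 by (meson add_mono order_trans)
  then show ?thesis
    by (simp add: algebra_simps)
qed

lemma norm_deviation_le_local:
  assumes "bounded_linear g" and head: "\<And>k. k < K \<Longrightarrow> norm (g (xs (k + l))) \<le> \<delta>"
    and "norm (g x) \<le> \<delta>" and all: "\<And>j. norm (g (xs j)) \<le> C"
  shows "norm (deviation n l g) \<le> onorm \<phi> * (M * \<delta> + (\<Sum>k. cmod (a n (k + K))) * C + \<delta>)"
proof -
  have \<delta>: "0 \<le> \<delta>"
    using assms(3) norm_ge_zero order_trans by blast
  have \<phi>: "0 \<le> onorm \<phi>"
    by (rule onorm_pos_le[OF \<phi>.bounded_linear_axioms])
  note le = norm_apply_le_onorm[OF \<phi>.bounded_linear_axioms]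
  have "norm (deviation n l g) \<le> norm (\<Sum>k. a n k * \<phi> (g (xs (k + l)))) + norm (\<phi> (g x))"
    unfolding deviation_def by (rule norm_triangle_ineq4)
  also have "norm (\<Sum>k. a n k * \<phi> (g (xs (k + l))))
      \<le> (\<Sum>k. cmod (a n k)) * (onorm \<phi> * \<delta>) + (\<Sum>k. cmod (a n (k + K))) * (onorm \<phi> * C)"
    by (rule norm_suminf_mult_le_split[OF summable_row]) (use le all head \<phi> \<delta> in auto)
  also have "\<dots> \<le> M * (onorm \<phi> * \<delta>) + (\<Sum>k. cmod (a n (k + K))) * (onorm \<phi> * C)"
    using row_norm_le \<phi> \<delta> by (intro add_right_mono mult_right_mono) auto
  also have "norm (\<phi> (g x)) \<le> onorm \<phi> * \<delta>"
    by (rule le[OF assms(3)])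
  finally show ?thesis
    by (simp add: algebra_simps)
qed

lemma deviation_le_fconv:
  assumes "h \<in> fconv S" and "\<And>g. g \<in> S \<Longrightarrow> bounded_linear g \<and> norm (deviation n l g) \<le> \<epsilon>"
  shows "norm (deviation n l h) \<le> \<epsilon>"
  using assms(1)
proof (rule fconvE)
  fix m :: nat and u g assume u: "\<And>i. i < m \<Longrightarrow> 0 \<le> u i" and g: "\<And>i. i < m \<Longrightarrow> g i \<in> S"
    and sum: "(\<Sum>i<m. u i) = 1" and h: "h = (\<lambda>y. \<Sum>i<m. u i *\<^sub>R g i y)"
  have "norm (deviation n l h) = norm (\<Sum>i<m. of_real (u i) * deviation n l (g i))"
    unfolding h using g assms(2) by (subst deviation_sum) auto
  also have "\<dots> \<le> (\<Sum>i<m. u i * \<epsilon>)"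
    using u g assms(2) by (intro order_trans[OF norm_sum] sum_mono) (simp add: norm_mult mult_left_mono)
  also have "\<dots> = \<epsilon>"
    using sum by (simp add: sum_distrib_right[symmetric])
  finally show ?thesis .
qed

lemma row_tail_small:
  assumes "0 < r"
  obtains K where "0 \<le> (\<Sum>k. cmod (a n (k + K)))" and "(\<Sum>k. cmod (a n (k + K))) < r"
proof -
  obtain K where "norm (\<Sum>k. cmod (a n (k + K))) < r"
    using suminf_exist_split[OF assms summable_row[of n]] by blast
  moreover have "0 \<le> (\<Sum>k. cmod (a n (k + K)))"
    using summable_ignore_initial_segment[OF summable_row[of n], of K] by (intro suminf_nonneg) auto
  ultimately show thesis
    using that by simp
qed

text \<open>A weak* neighbourhood only controls finitely many values: those at x and at the first K terms
  of the shifted sequence, where K is chosen so that the tail of the row of A is small.\<close>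

lemma deviation_wstar_continuous:
  assumes bl_g: "bounded_linear g" and "0 < \<eta>"
  obtains F \<delta> where "finite F" and "0 < \<delta>"
    and "\<And>h. bounded_linear h \<Longrightarrow> onorm h \<le> 1 \<Longrightarrow> (\<And>y. y \<in> F \<Longrightarrow> norm (h y - g y) < \<delta>) \<Longrightarrow>
           norm (deviation n l g - deviation n l h) \<le> \<eta>"
proof -
  define C where "C = (onorm g + 1) * R"
  define P where "P = onorm \<phi> + 1"
  have "0 \<le> C" and "0 \<le> onorm \<phi>" and "onorm \<phi> \<le> P" and "0 < P"
    unfolding C_def P_def using onorm_pos_le[OF bl_g] onorm_pos_le[OF \<phi>.bounded_linear_axioms] R_nonneg
    by auto
  define r where "r = \<eta> / (2 * P * (C + 1))"
  have "0 < r"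
    unfolding r_def using \<open>0 < \<eta>\<close> \<open>0 \<le> C\<close> \<open>0 < P\<close> by (intro divide_pos_pos mult_pos_pos) auto
  then obtain K where "0 \<le> (\<Sum>k. cmod (a n (k + K)))" and "(\<Sum>k. cmod (a n (k + K))) < r"
    by (rule row_tail_small)
  define t where "t = (\<Sum>k. cmod (a n (k + K)))"
  have "0 \<le> t" and "t < r"
    unfolding t_def by fact+
  define \<delta> where "\<delta> = \<eta> / (2 * P * (M + 1))"
  have "0 < \<delta>"
    unfolding \<delta>_def using \<open>0 < \<eta>\<close> \<open>0 < P\<close> M_nonneg by (intro divide_pos_pos mult_pos_pos) auto
  have "onorm \<phi> * (M * \<delta> + t * C + \<delta>) \<le> \<eta>"
  proof -
    have "onorm \<phi> * (M * \<delta> + t * C + \<delta>) = onorm \<phi> * ((M + 1) * \<delta>) + onorm \<phi> * (t * C)"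
      by (simp add: algebra_simps)
    also have "\<dots> \<le> P * ((M + 1) * \<delta>) + P * (r * (C + 1))"
      using \<open>t < r\<close> \<open>0 \<le> t\<close> \<open>0 \<le> C\<close> \<open>0 < \<delta>\<close> M_nonneg \<open>0 \<le> onorm \<phi>\<close> \<open>onorm \<phi> \<le> P\<close>
      by (intro add_mono mult_mono) auto
    also have "\<dots> = \<eta>"
      unfolding r_def \<delta>_def using \<open>0 < P\<close> \<open>0 \<le> C\<close> M_nonneg by (simp add: divide_simps)
    finally show ?thesis .
  qed
  show ?thesis
  proof
    show "finite (insert x ((\<lambda>k. xs (k + l)) ` {..<K}))"
      by simp
    fix h assume bl_h: "bounded_linear h" and "onorm h \<le> 1"
      and close: "\<And>y. y \<in> insert x ((\<lambda>k. xs (k + l)) ` {..<K}) \<Longrightarrow> norm (h y - g y) < \<delta>"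
    have h_le: "norm (h (xs j)) \<le> R" for j
      using order_trans[OF norm_apply_le_onorm[OF bl_h norm_xs_le[of j]]
          mult_right_mono[OF \<open>onorm h \<le> 1\<close> R_nonneg]] by simp
    have "norm (g (xs j) - h (xs j)) \<le> C" for j
      using norm_triangle_ineq4[of "g (xs j)" "h (xs j)"] norm_apply_le_onorm[OF bl_g norm_xs_le[of j]] h_le[of j]
      unfolding C_def by (simp add: algebra_simps)
    moreover have "norm (g y - h y) \<le> \<delta>" if "y \<in> insert x ((\<lambda>k. xs (k + l)) ` {..<K})" for y
      using close[OF that] by (simp add: norm_minus_commute)
    ultimately have "norm (deviation n l (\<lambda>y. g y - h y)) \<le> onorm \<phi> * (M * \<delta> + t * C + \<delta>)"
      unfolding t_def by (intro norm_deviation_le_local[OF bounded_linear_sub[OF bl_g bl_h]]) auto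
    then show "norm (deviation n l g - deviation n l h) \<le> \<eta>"
      using deviation_diff[OF bl_g bl_h] \<open>onorm \<phi> * (M * \<delta> + t * C + \<delta>) \<le> \<eta>\<close> by simp
  qed (rule \<open>0 < \<delta>\<close>)
qed

lemma deviation_le_wstar_closure:
  assumes D: "D \<subseteq> Collect bounded_linear" and g: "g \<in> wstar_closure D S"
    and S: "\<And>h. h \<in> S \<Longrightarrow> bounded_linear h \<and> onorm h \<le> 1 \<and> norm (deviation n l h) \<le> \<epsilon>"
  shows "norm (deviation n l g) \<le> \<epsilon>"
proof (rule field_le_epsilon)
  fix \<eta> :: real assume "0 < \<eta>"
  have bl_g: "bounded_linear g"
    using g D unfolding wstar_closure_def by auto
  obtain F \<delta> where "finite F" and "0 < \<delta>" and continuous: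
    "\<And>h. bounded_linear h \<Longrightarrow> onorm h \<le> 1 \<Longrightarrow> (\<And>y. y \<in> F \<Longrightarrow> norm (h y - g y) < \<delta>) \<Longrightarrow>
       norm (deviation n l g - deviation n l h) \<le> \<eta>"
    using deviation_wstar_continuous[OF bl_g \<open>0 < \<eta>\<close>, of n l] by blast
  have "\<forall>F e. finite F \<and> 0 < e \<longrightarrow> (\<exists>h\<in>S. \<forall>y\<in>F. norm (h y - g y) < e)"
    using g unfolding wstar_closure_def by blast
  then obtain h where "h \<in> S" and "\<forall>y\<in>F. norm (h y - g y) < \<delta>"
    using \<open>finite F\<close> \<open>0 < \<delta>\<close> by blast
  then have "norm (deviation n l g - deviation n l h) \<le> \<eta>" and "norm (deviation n l h) \<le> \<epsilon>"
    using continuous S by auto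
  then show "norm (deviation n l g) \<le> \<epsilon> + \<eta>"
    using norm_triangle_ineq2[of "deviation n l g" "deviation n l h"] by linarith
qed

lemma deviation_le_on_generated_hull:
  assumes D: "D \<subseteq> Collect bounded_linear" and B: "B \<subseteq> dual_ball D"
    and h: "h \<in> fconv (\<Union>m. wstar_closure D (fconv {g \<in> B. \<forall>n\<ge>m. \<forall>l. norm (deviation n l g) \<le> \<epsilon>}))"
  shows "bounded_linear h \<and> (\<exists>N. \<forall>n\<ge>N. \<forall>l. norm (deviation n l h) \<le> \<epsilon>)"
proof -
  define W where "W m = wstar_closure D (fconv {g \<in> B. \<forall>n\<ge>m. \<forall>l. norm (deviation n l g) \<le> \<epsilon>})" for m
  have "mono W"
    unfolding W_def by (intro monoI wstar_closure_mono fconv_mono) auto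
  have W: "bounded_linear g \<and> norm (deviation n l g) \<le> \<epsilon>" if "g \<in> W m" and "m \<le> n" for g m n l
  proof
    show "bounded_linear g"
      using that D unfolding W_def wstar_closure_def by auto
    have "bounded_linear g \<and> onorm g \<le> 1 \<and> norm (deviation n l g) \<le> \<epsilon>"
      if "g \<in> B" and "\<forall>n\<ge>m. \<forall>l. norm (deviation n l g) \<le> \<epsilon>" for g
      using that B D \<open>m \<le> n\<close> unfolding dual_ball_def by auto
    then have "bounded_linear h \<and> onorm h \<le> 1 \<and> norm (deviation n l h) \<le> \<epsilon>"
      if "h \<in> fconv {g \<in> B. \<forall>n\<ge>m. \<forall>l. norm (deviation n l g) \<le> \<epsilon>}" for h
      using bounded_linear_fconv[OF that] onorm_fconv_le[OF that] deviation_le_fconv[OF that] by blast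
    then show "norm (deviation n l g) \<le> \<epsilon>"
      using \<open>g \<in> W m\<close> D unfolding W_def by (intro deviation_le_wstar_closure) auto
  qed
  obtain N where "h \<in> fconv (W N)"
    using fconv_Union_mono[OF \<open>mono W\<close> h[folded W_def]] ..
  have "bounded_linear h"
    using \<open>h \<in> fconv (W N)\<close> by (rule bounded_linear_fconv) (use W[of _ N N] in blast)
  moreover have "norm (deviation n l h) \<le> \<epsilon>" if "N \<le> n" for n l
    using \<open>h \<in> fconv (W N)\<close> by (rule deviation_le_fconv) (use W that in blast)
  ultimately show ?thesis
    by blast
qed

lemma deviation_vanishes_dual_ball:
  assumes D: "D \<subseteq> Collect bounded_linear" and gen: "I_generates D B"
    and B: "\<And>g. g \<in> B \<Longrightarrow> deviation_vanishes g" and f: "f \<in> dual_ball D"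
  shows "deviation_vanishes f"
  unfolding deviation_vanishes_def
proof (intro allI impI)
  fix e :: real assume "0 < e"
  define Bn where "Bn m = {g \<in> B. \<forall>n\<ge>m. \<forall>l. norm (deviation n l g) \<le> e / 2}" for m
  have "B = (\<Union>m. Bn m)"
  proof (intro equalityI subsetI)
    fix g assume "g \<in> B"
    then obtain N where "\<forall>n\<ge>N. \<forall>l. norm (deviation n l g) < e / 2"
      using B \<open>0 < e\<close> unfolding deviation_vanishes_def by (meson half_gt_zero)
    then show "g \<in> (\<Union>m. Bn m)"
      using \<open>g \<in> B\<close> unfolding Bn_def by (auto intro: less_imp_le)
  qed (auto simp: Bn_def)
  then have "f \<in> dnorm_closure D (fconv (\<Union>m. wstar_closure D (fconv (Bn m))))"
    using gen f unfolding I_generates_def by blast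
  moreover define Q where "Q = onorm \<phi> * (M * R + norm x)"
  moreover have "0 \<le> Q"
    unfolding Q_def using onorm_pos_le[OF \<phi>.bounded_linear_axioms] M_nonneg R_nonneg by simp
  moreover have "0 < e / (4 * (Q + 1))"
    using \<open>0 < e\<close> \<open>0 \<le> Q\<close> by simp
  ultimately obtain h where h: "h \<in> fconv (\<Union>m. wstar_closure D (fconv (Bn m)))"
    and close: "onorm (\<lambda>y. f y - h y) < e / (4 * (Q + 1))"
    unfolding dnorm_closure_def by blast
  have "B \<subseteq> dual_ball D"
    using gen unfolding I_generates_def by blast
  then obtain N where bl_h: "bounded_linear h" and N: "\<forall>n\<ge>N. \<forall>l. norm (deviation n l h) \<le> e / 2"
    using deviation_le_on_generated_hull[OF D _ h[unfolded Bn_def]] by blast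
  have bl_f: "bounded_linear f"
    using f D unfolding dual_ball_def by auto
  have "norm (deviation n l f) < e" if "N \<le> n" for n l
  proof -
    have "norm (deviation n l (\<lambda>y. f y - h y)) \<le> Q * (e / (4 * (Q + 1)))"
      using norm_deviation_le[OF bounded_linear_sub[OF bl_f bl_h], of n l]
        mult_left_mono[OF less_imp_le[OF close] \<open>0 \<le> Q\<close>]
      unfolding Q_def by linarith
    also have "\<dots> < e / 2"
      using \<open>0 < e\<close> \<open>0 \<le> Q\<close> by (simp add: field_simps add_pos_nonneg)
    finally have "norm (deviation n l f - deviation n l h) < e / 2"
      using deviation_diff[OF bl_f bl_h, of n l] by simp
    then show ?thesis
      using N[rule_format, OF that, of l] norm_triangle_ineq2[of "deviation n l f" "deviation n l h"]
      by linarith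
  qed
  then show "\<exists>N. \<forall>n\<ge>N. \<forall>l. norm (deviation n l f) < e"
    by blast
qed

lemma deviation_vanishes_scaleR:
  assumes "bounded_linear g" and "deviation_vanishes g"
  shows "deviation_vanishes (\<lambda>y. r *\<^sub>R g y)"
  unfolding deviation_vanishes_def deviation_scaleR[OF assms(1)]
proof (intro allI impI)
  fix e :: real assume "0 < e"
  then have "0 < e / (\<bar>r\<bar> + 1)"
    by simp
  then obtain N where N: "\<forall>n\<ge>N. \<forall>l. norm (deviation n l g) < e / (\<bar>r\<bar> + 1)"
    using assms(2) unfolding deviation_vanishes_def by blast
  have "norm (of_real r * deviation n l g) < e" if "N \<le> n" for n l
  proof -
    have "norm (of_real r * deviation n l g) = \<bar>r\<bar> * norm (deviation n l g)"
      by (simp add: norm_mult)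
    also have "\<dots> \<le> \<bar>r\<bar> * (e / (\<bar>r\<bar> + 1))"
      using N that by (intro mult_left_mono) (auto intro: less_imp_le)
    also have "\<dots> < e"
      using \<open>0 < e\<close> by (simp add: field_simps)
    finally show ?thesis .
  qed
  then show "\<exists>N. \<forall>n\<ge>N. \<forall>l. norm (of_real r * deviation n l g) < e"
    by blast
qed

end

lemma FA_convergent_extends_to_dual:
  fixes \<phi> :: "'b::real_normed_vector \<Rightarrow> complex" and D :: "('a::real_normed_vector \<Rightarrow> 'b) set"
  assumes \<phi>: "bounded_linear \<phi>" and D: "D \<subseteq> Collect bounded_linear"
    and D_scaleR: "\<And>f r. f \<in> D \<Longrightarrow> (\<lambda>y. r *\<^sub>R f y) \<in> D"
    and gen: "I_generates D B" and "regular_matrix a" and "bounded (range xs)"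
    and B: "\<forall>g\<in>B. FA_convergent a (\<lambda>n. \<phi> (g (xs n))) (\<phi> (g x))" and f: "f \<in> D"
  shows "FA_convergent a (\<lambda>n. \<phi> (f (xs n))) (\<phi> (f x))"
proof -
  obtain M where "\<And>n. summable (\<lambda>k. cmod (a n k)) \<and> (\<Sum>k. cmod (a n k)) \<le> M"
    using \<open>regular_matrix a\<close> unfolding regular_matrix_def by blast
  moreover obtain R where "\<And>j. norm (xs j) \<le> R"
    using \<open>bounded (range xs)\<close> unfolding bounded_iff by blast
  ultimately interpret shifted_A_means \<phi> a xs x M R
    by (intro shifted_A_means.intro[OF \<phi>] shifted_A_means_axioms.intro) auto
  have bl_f: "bounded_linear f"
    using f D by auto
  define r where "r = onorm f + 1"
  have "0 < r"
    unfolding r_def using onorm_pos_le[OF bl_f] by simp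
  define f0 where "f0 y = (1 / r) *\<^sub>R f y" for y
  have bl_f0: "bounded_linear f0"
    unfolding f0_def by (rule bounded_linear_const_scaleR[OF bl_f])
  have "onorm f0 = onorm f / r"
    unfolding f0_def using onorm_scaleR[OF bl_f, of "1 / r"] \<open>0 < r\<close> by simp
  also have "\<dots> \<le> 1"
    using \<open>0 < r\<close> unfolding r_def by simp
  finally have "f0 \<in> dual_ball D"
    unfolding dual_ball_def f0_def using D_scaleR[OF f] by simp
  have "B \<subseteq> D"
    using gen unfolding I_generates_def dual_ball_def by auto
  then have "deviation_vanishes f0"
    using B D FA_convergent_iff_deviation_vanishes
    by (intro deviation_vanishes_dual_ball[OF D gen _ \<open>f0 \<in> dual_ball D\<close>]) blast
  then have "deviation_vanishes (\<lambda>y. r *\<^sub>R f0 y)"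
    by (rule deviation_vanishes_scaleR[OF bl_f0])
  moreover have "(\<lambda>y. r *\<^sub>R f0 y) = f"
    unfolding f0_def using \<open>0 < r\<close> by simp
  ultimately show ?thesis
    using FA_convergent_iff_deviation_vanishes[OF bl_f] by simp
qed


lemma cdual_subset_bounded_linear: "cdual J \<subseteq> Collect bounded_linear"
  unfolding cdual_def by auto

lemma cdual_scaleR: "f \<in> cdual J \<Longrightarrow> (\<lambda>y. r *\<^sub>R f y) \<in> cdual J"
  using bounded_linear_const_scaleR[of f r] unfolding cdual_def
  by (auto simp: scaleR_conv_of_real mult.left_commute)

lemma rdual_scaleR: "f \<in> rdual \<Longrightarrow> (\<lambda>y. r *\<^sub>R f y) \<in> rdual"
  using bounded_linear_const_scaleR[of f r] unfolding rdual_def by auto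

section \<open>Almost convergence and the Cesaro matrix\<close>

definition cesaro_matrix :: "nat \<Rightarrow> nat \<Rightarrow> complex" where
  "cesaro_matrix n k = (if k \<le> n then 1 / of_nat (Suc n) else 0)"

definition shifted_avg :: "nat \<Rightarrow> (nat \<Rightarrow> real) \<Rightarrow> nat \<Rightarrow> real" where
  "shifted_avg n y l = (\<Sum>k\<le>n. y (k + l)) / real (Suc n)"

lemma suminf_cesaro_matrix:
  "(\<Sum>k. cesaro_matrix n k * of_real (s k)) = of_real ((\<Sum>k\<le>n. s k) / real (Suc n))"
proof -
  have "(\<Sum>k. cesaro_matrix n k * of_real (s k)) = (\<Sum>k\<le>n. cesaro_matrix n k * of_real (s k))"
    by (rule suminf_finite) (auto simp: cesaro_matrix_def)
  also have "\<dots> = of_real ((\<Sum>k\<le>n. s k) / real (Suc n))"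
    by (simp add: cesaro_matrix_def sum_divide_distrib)
  finally show ?thesis .
qed

lemma norm_cesaro_matrix: "cmod (cesaro_matrix n k) = (if k \<le> n then 1 / real (Suc n) else 0)"
  unfolding cesaro_matrix_def by (simp add: norm_divide del: of_nat_Suc)

lemma regular_cesaro_matrix: "regular_matrix cesaro_matrix"
  unfolding regular_matrix_def
proof (intro conjI allI exI)
  fix n
  show "summable (\<lambda>k. cmod (cesaro_matrix n k))"
    by (rule summable_finite[of "{..n}"]) (auto simp: cesaro_matrix_def)
  have "(\<Sum>k. cmod (cesaro_matrix n k)) = (\<Sum>k\<le>n. cmod (cesaro_matrix n k))"
    by (rule suminf_finite) (auto simp: cesaro_matrix_def)
  then show "(\<Sum>k. cmod (cesaro_matrix n k)) \<le> 1"
    by (simp add: norm_cesaro_matrix)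
next
  have "(\<Sum>k. cesaro_matrix n k) = 1" for n
    using suminf_cesaro_matrix[of n "\<lambda>_. 1"] by simp
  then show "(\<lambda>n. \<Sum>k. cesaro_matrix n k) \<longlonglongrightarrow> 1"
    by simp
next
  fix k
  have "(\<lambda>n. of_real (inverse (real (Suc n))) :: complex) \<longlonglongrightarrow> of_real 0"
    by (rule tendsto_of_real[OF LIMSEQ_inverse_real_of_nat])
  moreover have "\<forall>\<^sub>F n in sequentially. of_real (inverse (real (Suc n))) = cesaro_matrix n k"
    unfolding eventually_sequentially by (auto simp: cesaro_matrix_def field_simps)
  ultimately show "(\<lambda>n. cesaro_matrix n k) \<longlonglongrightarrow> 0"
    by (simp add: Lim_transform_eventually)
qed

lemma FA_convergent_cesaro_iff:
  "FA_convergent cesaro_matrix (\<lambda>n. of_real (s n)) (of_real t) \<longleftrightarrow>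
     Bseq s \<and> (\<forall>e>0. \<exists>N. \<forall>n\<ge>N. \<forall>l. \<bar>shifted_avg n s l - t\<bar> < e)"
proof -
  have "Bseq (\<lambda>n. complex_of_real (s n)) \<longleftrightarrow> Bseq s"
    unfolding Bseq_def by simp
  moreover have "cmod ((\<Sum>k. cesaro_matrix n k * of_real (s (k + l))) - of_real t) = \<bar>shifted_avg n s l - t\<bar>" for n l
    unfolding suminf_cesaro_matrix shifted_avg_def by (metis norm_of_real of_real_diff)
  ultimately show ?thesis
    unfolding FA_convergent_def by simp
qed

lemma shifted_avg_add: "shifted_avg n (\<lambda>k. x k + y k) l = shifted_avg n x l + shifted_avg n y l"
  unfolding shifted_avg_def by (simp add: sum.distrib add_divide_distrib)

lemma shifted_avg_cmult: "shifted_avg n (\<lambda>k. c * x k) l = c * shifted_avg n x l"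
  unfolding shifted_avg_def by (simp add: sum_distrib_left[symmetric])

lemma shifted_avg_const: "shifted_avg n (\<lambda>k. c) l = c"
  unfolding shifted_avg_def by simp

lemma shifted_avg_nonneg: "(\<And>k. 0 \<le> x k) \<Longrightarrow> 0 \<le> shifted_avg n x l"
  unfolding shifted_avg_def by (intro divide_nonneg_nonneg sum_nonneg) auto

lemma abs_shifted_avg_le:
  assumes "\<And>k. \<bar>x k\<bar> \<le> B"
  shows "\<bar>shifted_avg n x l\<bar> \<le> B"
proof -
  have "\<bar>\<Sum>k\<le>n. x (k + l)\<bar> \<le> (\<Sum>k\<le>n. B)"
    using assms by (intro order_trans[OF sum_abs sum_mono])
  then have "\<bar>\<Sum>k\<le>n. x (k + l)\<bar> \<le> real (Suc n) * B"
    by simp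
  then show ?thesis
    unfolding shifted_avg_def by (simp add: field_simps del: of_nat_Suc)
qed

lemma abs_shifted_avg_Suc_diff_le:
  assumes "\<And>k. \<bar>x k\<bar> \<le> B"
  shows "\<bar>shifted_avg n (\<lambda>k. x (Suc k)) l - shifted_avg n x l\<bar> \<le> 2 * B / real (Suc n)"
proof -
  have "shifted_avg n (\<lambda>k. x (Suc k)) l - shifted_avg n x l = (x (Suc n + l) - x l) / real (Suc n)"
    using sum_telescope[of "\<lambda>k. x (k + l)" n]
    unfolding shifted_avg_def by (simp add: sum_subtractf diff_divide_distrib[symmetric])
  moreover have "\<bar>x (Suc n + l) - x l\<bar> \<le> 2 * B"
    using assms[of "Suc n + l"] assms[of l] by linarith
  ultimately show ?thesis
    by (simp add: divide_right_mono del: of_nat_Suc)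
qed

lemma Bseq_add_seq:
  fixes x y :: "nat \<Rightarrow> 'a::real_normed_vector"
  assumes "Bseq x" and "Bseq y"
  shows "Bseq (\<lambda>k. x k + y k)"
proof -
  obtain A B where "\<And>k. norm (x k) \<le> A" and "\<And>k. norm (y k) \<le> B"
    using assms by (meson BseqE)
  then show ?thesis
    by (intro BseqI'[of _ "A + B"]) (meson add_mono norm_triangle_le)
qed

lemma Bseq_sum_seq:
  fixes x :: "'i \<Rightarrow> nat \<Rightarrow> 'a::real_normed_vector"
  assumes "finite I" and "\<And>i. i \<in> I \<Longrightarrow> Bseq (x i)"
  shows "Bseq (\<lambda>k. \<Sum>i\<in>I. x i k)"
  using assms
proof (induction I rule: finite_induct)
  case (insert i I)
  then show ?case
    using Bseq_add_seq[of "x i" "\<lambda>k. \<Sum>i\<in>I. x i k"] by simp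
qed simp

lemma Bseq_shift: "Bseq y \<Longrightarrow> Bseq (\<lambda>l. y (k + l))"
  using Bseq_ignore_initial_segment[of y k] by (simp add: add.commute)

lemma Bseq_shifted_avg:
  assumes "Bseq y"
  shows "Bseq (shifted_avg n y)"
proof -
  have "Bseq (\<lambda>l. \<Sum>k\<le>n. y (k + l))"
    using assms by (intro Bseq_sum_seq Bseq_shift) auto
  then show ?thesis
    unfolding shifted_avg_def divide_inverse using Bseq_mult[OF _ Bfun_const] by blast
qed

lemma Bseq_abs_bound:
  fixes y :: "nat \<Rightarrow> real"
  shows "Bseq y \<Longrightarrow> \<exists>B. \<forall>k. \<bar>y k\<bar> \<le> B"
  unfolding Bseq_def real_norm_def by blast

context
  fixes L :: "(nat \<Rightarrow> real) \<Rightarrow> real"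
  assumes L: "banach_limit L"
begin

lemma banach_limit_add: "Bseq x \<Longrightarrow> Bseq y \<Longrightarrow> L (\<lambda>k. x k + y k) = L x + L y"
  using L unfolding banach_limit_def by blast

lemma banach_limit_cmult: "Bseq x \<Longrightarrow> L (\<lambda>k. c * x k) = c * L x"
  using L unfolding banach_limit_def by blast

lemma banach_limit_nonneg: "Bseq x \<Longrightarrow> (\<And>k. 0 \<le> x k) \<Longrightarrow> 0 \<le> L x"
  using L unfolding banach_limit_def by blast

lemma banach_limit_Suc: "Bseq x \<Longrightarrow> L (\<lambda>k. x (Suc k)) = L x"
  using L unfolding banach_limit_def by blast

lemma banach_limit_const: "L (\<lambda>k. c) = c"
  using banach_limit_cmult[OF Bfun_const, of c 1] L unfolding banach_limit_def by simp

lemma banach_limit_diff: "Bseq x \<Longrightarrow> Bseq y \<Longrightarrow> L (\<lambda>k. x k - y k) = L x - L y"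
  using banach_limit_add[of x "\<lambda>k. -1 * y k"] banach_limit_cmult[of y "-1"]
    Bseq_mult[OF Bfun_const, of y "-1"] by simp

lemma banach_limit_sum:
  assumes "finite I" and "\<And>i. i \<in> I \<Longrightarrow> Bseq (x i)"
  shows "L (\<lambda>k. \<Sum>i\<in>I. x i k) = (\<Sum>i\<in>I. L (x i))"
  using assms
proof (induction I rule: finite_induct)
  case empty
  show ?case
    using banach_limit_const[of 0] by simp
next
  case (insert i I)
  then show ?case
    using banach_limit_add[of "x i" "\<lambda>k. \<Sum>i\<in>I. x i k"] Bseq_sum_seq[of I x] by simp
qed

lemma banach_limit_shift: "Bseq y \<Longrightarrow> L (\<lambda>l. y (k + l)) = L y"
proof (induction k)
  case (Suc k)
  then show ?case
    using banach_limit_Suc[OF Bseq_shift[of y k]] by simp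
qed simp

lemma banach_limit_shifted_avg:
  assumes "Bseq y"
  shows "L (shifted_avg n y) = L y"
proof -
  have shifts: "Bseq (\<lambda>l. y (k + l))" for k
    using assms by (rule Bseq_shift)
  have "L (shifted_avg n y) = (1 / real (Suc n)) * L (\<lambda>l. \<Sum>k\<le>n. y (k + l))"
    unfolding shifted_avg_def
    using banach_limit_cmult[OF Bseq_sum_seq[of "{..n}" "\<lambda>k l. y (k + l)"], of "1 / real (Suc n)"] shifts
    by simp
  also have "\<dots> = L y"
    using banach_limit_sum[of "{..n}" "\<lambda>k l. y (k + l)"] banach_limit_shift[OF assms] shifts by simp
  finally show ?thesis .
qed

lemma abs_banach_limit_le:
  assumes "\<And>k. \<bar>y k\<bar> \<le> B"
  shows "\<bar>L y\<bar> \<le> B"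
proof -
  have y: "Bseq y"
    using assms by (intro BseqI'[of _ B]) simp
  have lower: "0 \<le> B + y k" and upper: "0 \<le> B - y k" for k
    using assms[of k] by linarith+
  have "Bseq (\<lambda>k. B - y k)"
    using Bseq_add_seq[OF Bfun_const Bseq_mult[OF Bfun_const y], of B "-1"] by simp
  then have "0 \<le> L (\<lambda>k. B - y k)"
    using upper by (rule banach_limit_nonneg)
  moreover have "0 \<le> L (\<lambda>k. B + y k)"
    using Bseq_add_seq[OF Bfun_const y] lower by (rule banach_limit_nonneg)
  moreover have "L (\<lambda>k. B - y k) = B - L y" and "L (\<lambda>k. B + y k) = B + L y"
    using banach_limit_diff[OF Bfun_const y] banach_limit_add[OF Bfun_const y] banach_limit_const by auto
  ultimately show ?thesis
    by linarith
qed

lemma banach_limit_eq_of_uniform_avg: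
  assumes y: "Bseq y" and uniform: "\<forall>e>0. \<exists>N. \<forall>n\<ge>N. \<forall>l. \<bar>shifted_avg n y l - t\<bar> < e"
  shows "L y = t"
proof -
  have "\<bar>L y - t\<bar> \<le> 0 + e" if "0 < e" for e
  proof -
    obtain N where "\<forall>l. \<bar>shifted_avg N y l - t\<bar> < e"
      using uniform \<open>0 < e\<close> by blast
    then have "\<bar>L (\<lambda>l. shifted_avg N y l - t)\<bar> \<le> e"
      by (intro abs_banach_limit_le less_imp_le) blast
    moreover have "L (\<lambda>l. shifted_avg N y l - t) = L y - t"
      using banach_limit_diff[OF Bseq_shifted_avg[OF y] Bfun_const] banach_limit_shifted_avg[OF y]
        banach_limit_const by simp
    ultimately show ?thesis
      by simp
  qed
  then show ?thesis
    using field_le_epsilon[of "\<bar>L y - t\<bar>" 0] by simp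
qed

end

lemma continuous_on_apply [continuous_intros]:
  "continuous_on S (\<lambda>f :: 'i \<Rightarrow> 'a::topological_space. f i)"
  by (rule continuous_on_subset[OF continuous_on_product_coordinates]) simp

lemma cluster_point_tendsto_eq:
  fixes F :: "nat \<Rightarrow> 'a::topological_space" and \<Phi> :: "'a \<Rightarrow> 'b::t2_space"
  assumes cluster: "inf (nhds L) (filtermap F sequentially) \<noteq> bot"
    and "continuous_on UNIV \<Phi>" and "(\<lambda>j. \<Phi> (F j)) \<longlonglongrightarrow> c"
  shows "\<Phi> L = c"
proof (rule ccontr)
  assume "\<Phi> L \<noteq> c"
  then obtain U V where "open U" "open V" "\<Phi> L \<in> U" "c \<in> V" "U \<inter> V = {}"
    using hausdorff[of "\<Phi> L" c] by blast
  have "open (\<Phi> -` U)"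
    using \<open>open U\<close> \<open>continuous_on UNIV \<Phi>\<close> by (rule open_vimage)
  then have "eventually (\<lambda>z. \<Phi> z \<in> U) (nhds L)"
    unfolding eventually_nhds using \<open>\<Phi> L \<in> U\<close> by (intro exI[of _ "\<Phi> -` U"]) auto
  moreover have "eventually (\<lambda>z. \<Phi> z \<in> V) (filtermap F sequentially)"
    using topological_tendstoD[OF assms(3) \<open>open V\<close> \<open>c \<in> V\<close>] by (simp add: eventually_filtermap)
  ultimately have "eventually (\<lambda>_. False) (inf (nhds L) (filtermap F sequentially))"
    unfolding eventually_inf using \<open>U \<inter> V = {}\<close> by (intro exI conjI) auto
  then show False
    using cluster by (simp add: eventually_False)
qed

lemma compact_real_box: "compact (PiE UNIV (\<lambda>i. {- b i..b i :: real}))"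
proof -
  have "compactin (product_topology (\<lambda>_. euclidean) UNIV) (PiE UNIV (\<lambda>i. {- b i..b i :: real}))"
    unfolding compactin_PiE by simp
  then show ?thesis
    unfolding euclidean_product_topology compactin_euclidean_iff .
qed

text \<open>Banach limits are obtained as cluster points of these functionals; the value 0 off bounded
  sequences is irrelevant, since the axioms of a Banach limit only concern bounded sequences.\<close>

definition avg_functional :: "nat \<Rightarrow> nat \<Rightarrow> (nat \<Rightarrow> real) \<Rightarrow> real" where
  "avg_functional n l y = (if Bseq y then shifted_avg n y l else 0)"

lemma avg_functional_Suc_diff_tendsto_0:
  assumes nn: "\<And>j. j \<le> nn j" and "Bseq x"
  shows "(\<lambda>j. avg_functional (nn j) (ll j) (\<lambda>k. x (Suc k)) - avg_functional (nn j) (ll j) x) \<longlonglongrightarrow> 0"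
proof -
  obtain B where B: "\<And>k. \<bar>x k\<bar> \<le> B"
    using Bseq_abs_bound[OF \<open>Bseq x\<close>] by blast
  have "Bseq (\<lambda>k. x (Suc k))"
    using \<open>Bseq x\<close> Bseq_Suc_iff by blast
  have "\<bar>avg_functional (nn j) (ll j) (\<lambda>k. x (Suc k)) - avg_functional (nn j) (ll j) x\<bar>
      \<le> 2 * B / real (Suc (nn j))" for j
    using abs_shifted_avg_Suc_diff_le[OF B] \<open>Bseq x\<close> \<open>Bseq (\<lambda>k. x (Suc k))\<close>
    by (simp add: avg_functional_def)
  also have "2 * B / real (Suc (nn j)) \<le> 2 * B * inverse (real (Suc j))" for j
    using nn[of j] B[of 0] by (simp add: divide_inverse[symmetric] divide_left_mono del: of_nat_Suc)
  finally show ?thesis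
    by (intro Lim_null_comparison[OF _ tendsto_mult_right_zero[OF LIMSEQ_inverse_real_of_nat, where c = "2 * B"]])
      (simp add: always_eventually)
qed

lemma banach_limit_of_cluster_point:
  assumes nn: "\<And>j. j \<le> nn j"
    and cluster: "inf (nhds L) (filtermap (\<lambda>j. avg_functional (nn j) (ll j)) sequentially) \<noteq> bot"
  shows "banach_limit L"
proof -
  let ?F = "\<lambda>j. avg_functional (nn j) (ll j)"
  have limit: "\<Phi> L = c" if "continuous_on UNIV \<Phi>" and "(\<lambda>j. \<Phi> (?F j)) \<longlonglongrightarrow> c"
    for \<Phi> :: "((nat \<Rightarrow> real) \<Rightarrow> real) \<Rightarrow> real" and c
    using cluster_point_tendsto_eq[where F = ?F and \<Phi> = \<Phi>, OF cluster that] .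
  have identity: "\<Phi> L = c" if "continuous_on UNIV \<Phi>" and "\<And>j. \<Phi> (?F j) = c"
    for \<Phi> :: "((nat \<Rightarrow> real) \<Rightarrow> real) \<Rightarrow> real" and c
    using limit[OF that(1)] that(2) by simp
  show ?thesis
    unfolding banach_limit_def
  proof (intro conjI allI impI)
    fix x y :: "nat \<Rightarrow> real" assume "Bseq x \<and> Bseq y"
    then have "L (\<lambda>k. x k + y k) - L x - L y = 0"
      by (intro identity[of "\<lambda>g. g (\<lambda>k. x k + y k) - g x - g y"])
        (auto intro!: continuous_intros simp: avg_functional_def shifted_avg_add Bseq_add_seq)
    then show "L (\<lambda>k. x k + y k) = L x + L y"
      by simp
  next
    fix c :: real and x :: "nat \<Rightarrow> real" assume "Bseq x"
    then have "L (\<lambda>k. c * x k) - c * L x = 0"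
      by (intro identity[of "\<lambda>g. g (\<lambda>k. c * x k) - c * g x"])
        (auto intro!: continuous_intros simp: avg_functional_def shifted_avg_cmult Bseq_mult[OF Bfun_const])
    then show "L (\<lambda>k. c * x k) = c * L x"
      by simp
  next
    show "L (\<lambda>k. 1) = 1"
      by (intro identity[of "\<lambda>g. g (\<lambda>k. 1)"])
        (auto intro!: continuous_intros simp: avg_functional_def shifted_avg_const Bfun_const)
  next
    fix x :: "nat \<Rightarrow> real" assume "Bseq x \<and> (\<forall>k. 0 \<le> x k)"
    then have "min (L x) 0 = 0"
      by (intro identity[of "\<lambda>g. min (g x) 0"])
        (auto intro!: continuous_intros simp: avg_functional_def shifted_avg_nonneg)
    then show "0 \<le> L x"
      by simp
  next
    fix x :: "nat \<Rightarrow> real" assume "Bseq x"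
    then have "L (\<lambda>k. x (Suc k)) - L x = 0"
      using avg_functional_Suc_diff_tendsto_0[OF nn]
      by (intro limit[of "\<lambda>g. g (\<lambda>k. x (Suc k)) - g x"]) (auto intro!: continuous_intros)
    then show "L (\<lambda>k. x (Suc k)) = L x"
      by simp
  qed
qed

lemma uniform_avg_of_almost_convergent:
  assumes s: "Bseq s" and limits: "\<And>L. banach_limit L \<Longrightarrow> L s = t"
  shows "\<forall>e>0. \<exists>N. \<forall>n\<ge>N. \<forall>l. \<bar>shifted_avg n s l - t\<bar> < e"
proof (rule ccontr)
  assume "\<not> ?thesis"
  then obtain e where "0 < e" and "\<forall>N. \<exists>n\<ge>N. \<exists>l. e \<le> \<bar>shifted_avg n s l - t\<bar>"
    by (auto simp: not_less)
  then obtain nn ll where nn: "\<And>j. j \<le> nn j" and far: "\<And>j. e \<le> \<bar>shifted_avg (nn j) s (ll j) - t\<bar>"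
    by metis
  have "\<forall>y :: nat \<Rightarrow> real. \<exists>B. Bseq y \<longrightarrow> (\<forall>k. \<bar>y k\<bar> \<le> B)"
    using Bseq_abs_bound by blast
  then obtain b :: "(nat \<Rightarrow> real) \<Rightarrow> real" where b: "\<And>y k. Bseq y \<Longrightarrow> \<bar>y k\<bar> \<le> b y"
    by metis
  let ?F = "\<lambda>j. avg_functional (nn j) (ll j)"
  let ?K = "PiE UNIV (\<lambda>y. {- \<bar>b y\<bar>..\<bar>b y\<bar>})"
  have "?F j \<in> ?K" for j
  proof (rule PiE_I)
    fix y
    show "?F j y \<in> {- \<bar>b y\<bar>..\<bar>b y\<bar>}"
    proof (cases "Bseq y")
      case True
      then have "\<bar>shifted_avg (nn j) y (ll j)\<bar> \<le> \<bar>b y\<bar>"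
        using b by (intro abs_shifted_avg_le) (meson abs_ge_self order_trans)
      then show ?thesis
        using True by (simp add: avg_functional_def abs_le_iff)
    qed (simp add: avg_functional_def)
  qed simp
  then have "eventually (\<lambda>g. g \<in> ?K) (filtermap ?F sequentially)"
    by (simp add: eventually_filtermap)
  moreover have "filtermap ?F sequentially \<noteq> bot"
    by (simp add: filtermap_bot_iff)
  ultimately obtain L where cluster: "inf (nhds L) (filtermap ?F sequentially) \<noteq> bot"
    using compact_real_box[of "\<lambda>y. \<bar>b y\<bar>"] unfolding compact_filter by blast
  have "L s = t"
    using limits banach_limit_of_cluster_point[OF nn cluster] by blast
  have "min \<bar>L s - t\<bar> e = e"
    using far s
    by (intro cluster_point_tendsto_eq[where \<Phi> = "\<lambda>g. min \<bar>g s - t\<bar> e", OF cluster])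
      (auto intro!: continuous_intros simp: avg_functional_def)
  then show False
    using \<open>L s = t\<close> \<open>0 < e\<close> by simp
qed

lemma almost_convergent_iff_FA_cesaro:
  "almost_convergent s t \<longleftrightarrow> FA_convergent cesaro_matrix (\<lambda>n. of_real (s n)) (of_real t)"
  unfolding almost_convergent_def FA_convergent_cesaro_iff
  using uniform_avg_of_almost_convergent banach_limit_eq_of_uniform_avg by blast

theorem corollary3p6:
  shows "(\<forall>(J :: 'a::banach \<Rightarrow> 'a) (B :: ('a \<Rightarrow> complex) set) a (xs :: nat \<Rightarrow> 'a) x.
            complex_structure J \<and> I_generates (cdual J) B \<and> regular_matrix a \<and> bounded (range xs)
            \<and> (\<forall>f\<in>B. FA_convergent a (\<lambda>n. f (xs n)) (f x))
            \<longrightarrow> (\<forall>f\<in>cdual J. FA_convergent a (\<lambda>n. f (xs n)) (f x)))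
       \<and> (\<forall>(B :: ('b::banach \<Rightarrow> real) set) a (xs :: nat \<Rightarrow> 'b) x.
            I_generates rdual B \<and> regular_matrix a \<and> bounded (range xs)
            \<and> (\<forall>f\<in>B. FA_convergent a (\<lambda>n. complex_of_real (f (xs n))) (complex_of_real (f x)))
            \<longrightarrow> (\<forall>f\<in>rdual. FA_convergent a (\<lambda>n. complex_of_real (f (xs n))) (complex_of_real (f x))))
       \<and> (\<forall>(B :: ('b::banach \<Rightarrow> real) set) (xs :: nat \<Rightarrow> 'b) x.
            I_generates rdual B \<and> bounded (range xs)
            \<and> (\<forall>f\<in>B. almost_convergent (\<lambda>n. f (xs n)) (f x))
            \<longrightarrow> (\<forall>f\<in>rdual. almost_convergent (\<lambda>n. f (xs n)) (f x)))"
proof -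
  have complex_dual: "FA_convergent a (\<lambda>n. f (xs n)) (f x)"
    if "I_generates (cdual J) B" "regular_matrix a" "bounded (range xs)"
      "\<forall>g\<in>B. FA_convergent a (\<lambda>n. g (xs n)) (g x)" "f \<in> cdual J"
    for J :: "'a \<Rightarrow> 'a" and B a xs x f
    using FA_convergent_extends_to_dual[where \<phi> = "\<lambda>z. z", OF bounded_linear_ident
        cdual_subset_bounded_linear cdual_scaleR that] by simp
  have real_dual: "FA_convergent a (\<lambda>n. of_real (f (xs n))) (of_real (f x))"
    if "I_generates rdual B" "regular_matrix a" "bounded (range xs)"
      "\<forall>g\<in>B. FA_convergent a (\<lambda>n. of_real (g (xs n))) (of_real (g x))" "f \<in> rdual"
    for B :: "('b \<Rightarrow> real) set" and a xs x f
    using FA_convergent_extends_to_dual[OF bounded_linear_of_real _ rdual_scaleR that]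
    unfolding rdual_def by blast
  show ?thesis
    using complex_dual real_dual[where a = cesaro_matrix] regular_cesaro_matrix
    unfolding almost_convergent_iff_FA_cesaro by (blast intro: real_dual)
qed

end
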